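(* If $G$ is a finite simple graph with chromatic number $\chi(G)=3$, then $\mathrm{Hom}(G,K_3)$ is disconnected.
   Context: $K_3$ is the complete graph on 3 vertices. For graphs $G,H$, the homomorphism complex $\mathrm{Hom}(G,H)$ is the polyhedral complex whose cells are functions $\eta:V(G)\to 2^{V(H)}\setminus\{\varnothing\}$ such that whenever $\{x,y\}\in E(G)$ we have $\eta(x)\times\eta(y)\subseteq E(H)$; the cell $\eta$ is a product of simplices of dimension $\sum_{v}(|\eta(v)|-1)$, with face relation $\eta\subseteq\tau$ iff $\eta(v)\subseteq\tau(v)$ for all $v$. Its 0-cells are the graph homomorphisms $G\to H$. Disconnected means the (geometric realization of the) complex is nonempty and has more than one path component. *)

theory Defs
  imports "HOL-Analysis.Analysis"
begin

definition finite_simple_graph :: "'a set \<Rightarrow> ('a \<Rightarrow> 'a \<Rightarrow> bool) \<Rightarrow> bool" where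
  "finite_simple_graph V E \<longleftrightarrow> finite V \<and>
     (\<forall>x y. E x y \<longrightarrow> x \<in> V \<and> y \<in> V \<and> x \<noteq> y \<and> E y x)"

definition colorable :: "'a set \<Rightarrow> ('a \<Rightarrow> 'a \<Rightarrow> bool) \<Rightarrow> nat \<Rightarrow> bool" where
  "colorable V E k \<longleftrightarrow> (\<exists>c :: 'a \<Rightarrow> nat. (\<forall>v\<in>V. c v < k) \<and>
     (\<forall>x\<in>V. \<forall>y\<in>V. E x y \<longrightarrow> c x \<noteq> c y))"

definition chromatic_number :: "'a set \<Rightarrow> ('a \<Rightarrow> 'a \<Rightarrow> bool) \<Rightarrow> nat" where
  "chromatic_number V E = (LEAST k. colorable V E k)"

definition hom_cell :: "'a set \<Rightarrow> ('a \<Rightarrow> 'a \<Rightarrow> bool) \<Rightarrow> 'b set \<Rightarrow> ('b \<Rightarrow> 'b \<Rightarrow> bool)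
    \<Rightarrow> ('a \<Rightarrow> 'b set) \<Rightarrow> bool" where
  "hom_cell V E W F \<eta> \<longleftrightarrow>
     (\<forall>v\<in>V. \<eta> v \<noteq> {} \<and> \<eta> v \<subseteq> W) \<and>
     (\<forall>x\<in>V. \<forall>y\<in>V. E x y \<longrightarrow> (\<forall>a\<in>\<eta> x. \<forall>b\<in>\<eta> y. F a b))"

text \<open>Geometric realization of Hom(G,H) as the subcomplex of the product of
simplices prod_{v in V(G)} Delta^{V(H)}: a point is f v w (barycentric coordinate
of w in the v-th simplex); it belongs to the closed cell eta with
eta(v) = support of f v, and lies in the complex iff that eta is a cell.
Topology: product topology on functions (= Euclidean topology here, since
all coordinates outside V \<times> W vanish).\<close>
definition hom_realization :: "'a set \<Rightarrow> ('a \<Rightarrow> 'a \<Rightarrow> bool) \<Rightarrow> 'b set \<Rightarrow> ('b \<Rightarrow> 'b \<Rightarrow> bool)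
    \<Rightarrow> ('a \<Rightarrow> 'b \<Rightarrow> real) set" where
  "hom_realization V E W F =
     {f. (\<forall>v w. f v w \<noteq> 0 \<longrightarrow> v \<in> V \<and> w \<in> W) \<and>
         (\<forall>v w. 0 \<le> f v w) \<and>
         (\<forall>v\<in>V. sum (f v) W = 1) \<and>
         hom_cell V E W F (\<lambda>v. {w\<in>W. 0 < f v w})}"

definition K3_V :: "nat set" where "K3_V = {0, 1, 2}"
definition K3_E :: "nat \<Rightarrow> nat \<Rightarrow> bool" where
  "K3_E a b \<longleftrightarrow> a \<in> K3_V \<and> b \<in> K3_V \<and> a \<noteq> b"

definition disconnected_space :: "'c::topological_space set \<Rightarrow> bool" where
  "disconnected_space S \<longleftrightarrow> S \<noteq> {} \<and> \<not> path_connected S"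

end

theory Submission
  imports Defs
begin

text \<open>
  Colour the triangle cyclically and let a step from colour a to colour b of a 3-colouring along
  a closed walk count +1 if b = a + 1 (mod 3) and -1 otherwise. The sum of these turns, the
  winding number of the colouring around the walk, is odd when the walk is odd, and it is
  negated by the reflection a \<mapsto> -a (mod 3) of the colours. On a point of the complex, take at
  each vertex any colour of its support: along an edge the supports are disjoint, which makes the
  winding number independent of the choices, and supports can only grow nearby, which makes it
  locally constant. A non-bipartite graph has an odd closed walk, and a 3-colouring together
  with its reflection then gives two points of the complex with nonzero winding numbers of
  opposite sign, which therefore lie in different components.
\<close>

definition turn :: "nat \<Rightarrow> nat \<Rightarrow> int" where
  "turn a b = (if b = (a + 1) mod 3 then 1 else -1)"

definition winding :: "(nat \<Rightarrow> nat) \<Rightarrow> nat \<Rightarrow> int" where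
  "winding c n = (\<Sum>i<n. turn (c i) (c (Suc i)))"

definition reflect3 :: "nat \<Rightarrow> nat" where
  "reflect3 a = (3 - a) mod 3"

lemma odd_turn: "odd (turn a b)"
  by (simp add: turn_def)

lemma odd_winding: "odd n \<Longrightarrow> odd (winding c n)"
  by (simp add: winding_def even_sum_iff odd_turn)

lemma less_3_cases: "(x :: nat) < 3 \<Longrightarrow> x = 0 \<or> x = 1 \<or> x = 2"
  by auto

lemma turn_swap:
  assumes "a < 3" "b < 3" "a \<noteq> b"
  shows "turn b a = - turn a b"
  using less_3_cases[OF assms(1)] less_3_cases[OF assms(2)] assms(3)
  by (elim disjE) (simp_all add: turn_def)

lemma reflect3_less: "reflect3 a < 3"
  by (simp add: reflect3_def)

lemma reflect3_inj:
  assumes "a < 3" "b < 3" "reflect3 a = reflect3 b"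
  shows "a = b"
  using less_3_cases[OF assms(1)] less_3_cases[OF assms(2)] assms(3)
  by (elim disjE) (simp_all add: reflect3_def)

lemma turn_reflect3:
  assumes "a < 3" "b < 3" "a \<noteq> b"
  shows "turn (reflect3 a) (reflect3 b) = - turn a b"
  using less_3_cases[OF assms(1)] less_3_cases[OF assms(2)] assms(3)
  by (elim disjE) (simp_all add: turn_def reflect3_def)

lemma winding_reflect3:
  assumes "\<forall>i<n. c i < 3 \<and> c (Suc i) < 3 \<and> c i \<noteq> c (Suc i)"
  shows "winding (reflect3 \<circ> c) n = - winding c n"
  using assms by (simp add: winding_def turn_reflect3 sum_negf)

text \<open>
  Changing both ends of a step changes its turn by a telescoping amount, as long as no colour at
  one end equals a colour at the other; for a \<noteq> a' the bracket turn a a' - turn a' a is 2 turn a a'.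
\<close>

lemma turn_change:
  assumes "a < 3" "a' < 3" "b < 3" "a \<noteq> b" "a' \<noteq> b"
  shows "turn a' b - turn a b = turn a a' - turn a' a"
  using less_3_cases[OF assms(1)] less_3_cases[OF assms(2)] less_3_cases[OF assms(3)] assms(4,5)
  by (elim disjE) (simp_all add: turn_def)

lemma turn_difference:
  assumes "a < 3" "a' < 3" "b < 3" "b' < 3"
    and "a \<noteq> b" "a \<noteq> b'" "a' \<noteq> b" "a' \<noteq> b'"
  shows "turn a' b' - turn a b = (turn a a' - turn a' a) - (turn b b' - turn b' b)"
proof -
  have "turn a' b' - turn a b' = turn a a' - turn a' a"
    using turn_change[of a a' b'] assms by simp
  moreover have "turn b' a - turn b a = turn b b' - turn b' b"
    using turn_change[of b b' a] assms by simp
  moreover have "turn a b' = - turn b' a" "turn a b = - turn b a"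
    using turn_swap[of b' a] turn_swap[of b a] assms by simp_all
  ultimately show ?thesis
    by linarith
qed

lemma winding_cong:
  assumes closed: "c 0 = c n" "c' 0 = c' n"
    and less3: "\<forall>i\<le>n. c i < 3 \<and> c' i < 3"
    and disjoint: "\<forall>i<n. {c i, c' i} \<inter> {c (Suc i), c' (Suc i)} = {}"
  shows "winding c' n = winding c n"
proof -
  define \<delta> where "\<delta> i = turn (c i) (c' i) - turn (c' i) (c i)" for i
  have step: "turn (c' i) (c' (Suc i)) - turn (c i) (c (Suc i)) = \<delta> i - \<delta> (Suc i)" if "i < n" for i
    using turn_difference[of "c i" "c' i" "c (Suc i)" "c' (Suc i)"] less3 disjoint that
    by (auto simp: \<delta>_def)
  have "winding c' n - winding c n = (\<Sum>i<n. \<delta> i - \<delta> (Suc i))"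
    unfolding winding_def sum_subtractf[symmetric] by (rule sum.cong) (simp_all add: step)
  also have "\<dots> = \<delta> 0 - \<delta> n"
    by (rule sum_lessThan_telescope')
  also have "\<dots> = 0"
    using closed by (simp add: \<delta>_def)
  finally show ?thesis by simp
qed

lemma relpowp_symp:
  assumes "symp E" "(E ^^ n) x y"
  shows "(E ^^ n) y x"
  using assms(2)
proof (induction n arbitrary: y)
  case 0
  then show ?case by simp
next
  case (Suc n)
  then obtain z where "(E ^^ n) x z" "E z y"
    by (blast elim: relpowp_Suc_E)
  then show ?case
    using Suc.IH assms(1) by (blast intro: relpowp_Suc_I2 dest: sympD)
qed

lemma even_add_if_closed_walks_even:
  assumes "symp E" and even: "\<forall>m u. (E ^^ m) u u \<longrightarrow> even m"
    and "(E ^^ p) u v" "(E ^^ q) u v"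
  shows "even (p + q)"
proof -
  have "(E ^^ (p + q)) u u"
    using assms(3) relpowp_symp[OF assms(1,4)] by (auto simp: relpowp_add)
  then show ?thesis
    using even by blast
qed

text \<open>
  Without odd closed walks, two walks between the same vertices have equal parity, so the parity
  of a walk from a fixed root of each component is a proper 2-colouring.
\<close>

lemma colorable_2_if_closed_walks_even:
  assumes "symp E" and even: "\<forall>m u. (E ^^ m) u u \<longrightarrow> even m"
  shows "colorable V E 2"
proof -
  define root where "root v = (SOME u. E\<^sup>*\<^sup>* u v)" for v
  define len where "len v = (SOME m. (E ^^ m) (root v) v)" for v
  have walk_from_root: "(E ^^ len v) (root v) v" for v
  proof -
    have "E\<^sup>*\<^sup>* (root v) v"
      unfolding root_def by (rule someI[of _ v]) simp
    then show ?thesis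
      unfolding len_def rtranclp_power by (rule someI_ex)
  qed
  have "len x mod 2 \<noteq> len y mod 2" if "E x y" for x y
  proof -
    have "E\<^sup>*\<^sup>* u x \<longleftrightarrow> E\<^sup>*\<^sup>* u y" for u
      using that assms(1) by (meson rtranclp.rtrancl_into_rtrancl sympD)
    then have "root y = root x"
      unfolding root_def by simp
    then have "(E ^^ Suc (len x)) (root x) y" "(E ^^ len y) (root x) y"
      using walk_from_root[of x] walk_from_root[of y] that by (auto intro: relpowp_Suc_I)
    then have "even (Suc (len x) + len y)"
      by (rule even_add_if_closed_walks_even[OF assms])
    then show ?thesis
      by presburger
  qed
  then show ?thesis
    unfolding colorable_def by (intro exI[of _ "\<lambda>v. len v mod 2"]) auto
qed

lemma colorable_card:
  assumes "finite V" "\<forall>x\<in>V. \<not> E x x"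
  shows "colorable V E (card V)"
proof -
  obtain f where f: "bij_betw f V {0..<card V}"
    using ex_bij_betw_finite_nat[OF assms(1)] by blast
  then have "\<forall>v\<in>V. f v < card V" and "inj_on f V"
    by (auto simp: bij_betw_def)
  then show ?thesis
    unfolding colorable_def using assms(2) by (intro exI[of _ f]) (metis inj_on_eq_iff)
qed

lemma colorable_chromatic_number:
  assumes "finite_simple_graph V E"
  shows "colorable V E (chromatic_number V E)"
proof -
  have "colorable V E (card V)"
    using assms by (intro colorable_card) (auto simp: finite_simple_graph_def)
  then show ?thesis
    unfolding chromatic_number_def by (rule LeastI)
qed

lemma not_colorable_less_chromatic_number:
  "k < chromatic_number V E \<Longrightarrow> \<not> colorable V E k"
  unfolding chromatic_number_def by (rule not_less_Least)

lemma odd_closed_walk: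
  assumes "finite_simple_graph V E" and "\<not> colorable V E 2"
  obtains w n where "odd n" "w 0 = w n" "\<forall>i<n. E (w i) (w (Suc i))" "\<forall>i\<le>n. w i \<in> V"
proof -
  have "symp E" and edge_in_V: "\<And>x y. E x y \<Longrightarrow> x \<in> V \<and> y \<in> V"
    using assms(1) by (auto simp: finite_simple_graph_def symp_def)
  then obtain n u where "odd n" "(E ^^ n) u u"
    using colorable_2_if_closed_walks_even assms(2) by blast
  moreover from this obtain w where w: "w 0 = w n" "\<forall>i<n. E (w i) (w (Suc i))"
    by (metis relpowp_fun_conv)
  moreover have "\<forall>i\<le>n. w i \<in> V"
    using w edge_in_V \<open>odd n\<close> by (metis le_neq_implies_less odd_pos)
  ultimately show thesis
    using that by blast
qed

definition hom_support :: "('a \<Rightarrow> nat \<Rightarrow> real) \<Rightarrow> 'a \<Rightarrow> nat set" where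
  "hom_support f v = {a \<in> K3_V. 0 < f v a}"

definition pick_colour :: "('a \<Rightarrow> nat \<Rightarrow> real) \<Rightarrow> 'a \<Rightarrow> nat" where
  "pick_colour f v = (LEAST a. a \<in> hom_support f v)"

definition hom_winding :: "(nat \<Rightarrow> 'a) \<Rightarrow> nat \<Rightarrow> ('a \<Rightarrow> nat \<Rightarrow> real) \<Rightarrow> int" where
  "hom_winding w n f = winding (\<lambda>i. pick_colour f (w i)) n"

definition proper_3_colouring :: "'a set \<Rightarrow> ('a \<Rightarrow> 'a \<Rightarrow> bool) \<Rightarrow> ('a \<Rightarrow> nat) \<Rightarrow> bool" where
  "proper_3_colouring V E c \<longleftrightarrow>
     (\<forall>v\<in>V. c v < 3) \<and> (\<forall>x\<in>V. \<forall>y\<in>V. E x y \<longrightarrow> c x \<noteq> c y)"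

definition colouring_point :: "'a set \<Rightarrow> ('a \<Rightarrow> nat) \<Rightarrow> 'a \<Rightarrow> nat \<Rightarrow> real" where
  "colouring_point V c v a = (if v \<in> V \<and> a = c v then 1 else 0)"

lemma hom_support_less_3: "a \<in> hom_support f v \<Longrightarrow> a < 3"
  by (auto simp: hom_support_def K3_V_def)

lemma pick_colour_in_hom_support:
  assumes "f \<in> hom_realization V E K3_V K3_E" "v \<in> V"
  shows "pick_colour f v \<in> hom_support f v"
proof -
  have "hom_support f v \<noteq> {}"
    using assms by (auto simp: hom_realization_def hom_cell_def hom_support_def)
  then show ?thesis
    unfolding pick_colour_def by (meson LeastI ex_in_conv)
qed

lemma hom_support_edge_disjoint:
  assumes "f \<in> hom_realization V E K3_V K3_E" "x \<in> V" "y \<in> V" "E x y"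
  shows "hom_support f x \<inter> hom_support f y = {}"
  using assms by (fastforce simp: hom_realization_def hom_cell_def hom_support_def K3_E_def)

lemma open_hom_support_superset:
  assumes "finite V"
  shows "open {g :: 'a \<Rightarrow> nat \<Rightarrow> real. \<forall>v\<in>V. hom_support f v \<subseteq> hom_support g v}"
proof -
  have "{g. \<forall>v\<in>V. hom_support f v \<subseteq> hom_support g v} =
      (\<Inter>v\<in>V. \<Inter>a\<in>hom_support f v. {g :: 'a \<Rightarrow> nat \<Rightarrow> real. 0 < g v a})"
    by (auto simp: hom_support_def)
  moreover have "open {g :: 'a \<Rightarrow> nat \<Rightarrow> real. 0 < g v a}" for v a
  proof (rule open_Collect_less[OF continuous_on_const])
    show "continuous_on UNIV (\<lambda>g :: 'a \<Rightarrow> nat \<Rightarrow> real. g v a)"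
      by (rule continuous_on_product_then_coordinatewise) simp
  qed
  moreover have "finite (hom_support f v)" for v
    by (simp add: hom_support_def K3_V_def)
  ultimately show ?thesis
    using assms by (simp add: open_INT)
qed

lemma hom_support_colouring_point:
  "v \<in> V \<Longrightarrow> c v < 3 \<Longrightarrow> hom_support (colouring_point V c) v = {c v}"
  by (auto simp: hom_support_def colouring_point_def K3_V_def)

lemma colorable_3_iff: "colorable V E 3 \<longleftrightarrow> (\<exists>c. proper_3_colouring V E c)"
  by (simp add: colorable_def proper_3_colouring_def)

lemma proper_3_colouring_reflect3:
  "proper_3_colouring V E c \<Longrightarrow> proper_3_colouring V E (reflect3 \<circ> c)"
  unfolding proper_3_colouring_def by (simp add: reflect3_less) (metis reflect3_inj)

lemma colouring_point_in_hom_realization: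
  assumes "proper_3_colouring V E c"
  shows "colouring_point V c \<in> hom_realization V E K3_V K3_E"
  unfolding hom_realization_def hom_support_def[symmetric, abs_def]
proof (intro CollectI conjI allI impI ballI)
  fix v a
  show "0 \<le> colouring_point V c v a"
    by (simp add: colouring_point_def)
  assume "colouring_point V c v a \<noteq> 0"
  then show "v \<in> V" "a \<in> K3_V"
    using assms by (auto simp: proper_3_colouring_def colouring_point_def K3_V_def split: if_splits)
next
  fix v assume "v \<in> V"
  then show "sum (colouring_point V c v) K3_V = 1"
    using assms by (auto simp: proper_3_colouring_def colouring_point_def K3_V_def)
next
  show "hom_cell V E K3_V K3_E (hom_support (colouring_point V c))"
    using assms
    by (auto simp: proper_3_colouring_def hom_cell_def hom_support_colouring_point K3_E_def K3_V_def)
qed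

lemma pick_colour_colouring_point:
  "v \<in> V \<Longrightarrow> c v < 3 \<Longrightarrow> pick_colour (colouring_point V c) v = c v"
  by (simp add: pick_colour_def hom_support_colouring_point Least_equality)

lemma hom_winding_colouring_point:
  assumes "\<forall>v\<in>V. c v < 3" "\<forall>i\<le>n. w i \<in> V"
  shows "hom_winding w n (colouring_point V c) = winding (c \<circ> w) n"
  using assms unfolding hom_winding_def winding_def
  by (intro sum.cong) (simp_all add: pick_colour_colouring_point)

lemma hom_winding_reflect3:
  assumes c: "proper_3_colouring V E c"
    and walk: "\<forall>i<n. E (w i) (w (Suc i))" "\<forall>i\<le>n. w i \<in> V"
  shows "hom_winding w n (colouring_point V (reflect3 \<circ> c)) =
    - hom_winding w n (colouring_point V c)"
proof -
  have colours: "\<forall>v\<in>V. c v < 3" "\<forall>v\<in>V. (reflect3 \<circ> c) v < 3"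
    using c proper_3_colouring_reflect3[OF c] by (simp_all add: proper_3_colouring_def)
  have "\<forall>i<n. c (w i) < 3 \<and> c (w (Suc i)) < 3 \<and> c (w i) \<noteq> c (w (Suc i))"
  proof (intro allI impI)
    fix i assume "i < n"
    then have "w i \<in> V" "w (Suc i) \<in> V"
      using walk(2) by simp_all
    then show "c (w i) < 3 \<and> c (w (Suc i)) < 3 \<and> c (w i) \<noteq> c (w (Suc i))"
      using c walk(1) \<open>i < n\<close> unfolding proper_3_colouring_def by blast
  qed
  then have "winding (reflect3 \<circ> (c \<circ> w)) n = - winding (c \<circ> w) n"
    using winding_reflect3[of n "c \<circ> w"] by simp
  then show ?thesis
    by (simp only: hom_winding_colouring_point[OF colours(1) walk(2)]
        hom_winding_colouring_point[OF colours(2) walk(2)] o_assoc)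
qed

lemma hom_winding_constant_on_hom_realization:
  assumes "finite V" and connected: "connected (hom_realization V E K3_V K3_E)"
    and walk: "w 0 = w n" "\<forall>i<n. E (w i) (w (Suc i))" "\<forall>i\<le>n. w i \<in> V"
  shows "hom_winding w n constant_on hom_realization V E K3_V K3_E"
    (is "?I constant_on ?R")
proof (rule locally_constant_imp_constant[OF connected])
  fix f assume f: "f \<in> ?R"
  define T where "T = ?R \<inter> {g. \<forall>v\<in>V. hom_support f v \<subseteq> hom_support g v}"
  have "?I g = ?I f" if "g \<in> T" for g
    unfolding hom_winding_def
  proof (rule winding_cong)
    have g: "g \<in> ?R" and grows: "\<forall>v\<in>V. hom_support f v \<subseteq> hom_support g v"
      using \<open>g \<in> T\<close> by (simp_all add: T_def)
    have picks: "pick_colour f (w i) \<in> hom_support g (w i)" "pick_colour g (w i) \<in> hom_support g (w i)"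
      if "i \<le> n" for i
      using pick_colour_in_hom_support[OF f] pick_colour_in_hom_support[OF g] grows walk(3) that
      by blast+
    show "\<forall>i\<le>n. pick_colour f (w i) < 3 \<and> pick_colour g (w i) < 3"
      by (intro allI impI conjI) (meson picks hom_support_less_3)+
    show "\<forall>i<n. {pick_colour f (w i), pick_colour g (w i)} \<inter>
        {pick_colour f (w (Suc i)), pick_colour g (w (Suc i))} = {}"
    proof (intro allI impI)
      fix i assume "i < n"
      then have "hom_support g (w i) \<inter> hom_support g (w (Suc i)) = {}"
        using hom_support_edge_disjoint[OF g] walk(2,3) by simp
      with picks[of i] picks[of "Suc i"] \<open>i < n\<close>
      show "{pick_colour f (w i), pick_colour g (w i)} \<inter>
          {pick_colour f (w (Suc i)), pick_colour g (w (Suc i))} = {}"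
        by auto
    qed
  qed (simp_all add: walk(1))
  moreover have "openin (top_of_set ?R) T"
    unfolding T_def by (rule openin_open_Int[OF open_hom_support_superset[OF assms(1)]])
  moreover have "f \<in> T"
    using f by (simp add: T_def)
  ultimately show "\<exists>T. openin (top_of_set ?R) T \<and> f \<in> T \<and> (\<forall>g\<in>T. ?I g = ?I f)"
    by blast
qed

theorem theorem4p1:
  fixes V :: "'a set" and E :: "'a \<Rightarrow> 'a \<Rightarrow> bool"
  assumes "finite_simple_graph V E"
    and "chromatic_number V E = 3"
  shows "disconnected_space (hom_realization V E K3_V K3_E)"
proof -
  have "finite V"
    using assms(1) by (simp add: finite_simple_graph_def)
  obtain c where c: "proper_3_colouring V E c"
    using colorable_chromatic_number[OF assms(1)] assms(2) by (auto simp: colorable_3_iff)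
  have "\<not> colorable V E 2"
    by (rule not_colorable_less_chromatic_number) (simp add: assms(2))
  then obtain w n where "odd n" and walk: "w 0 = w n" "\<forall>i<n. E (w i) (w (Suc i))" "\<forall>i\<le>n. w i \<in> V"
    by (rule odd_closed_walk[OF assms(1)])
  have "hom_winding w n (colouring_point V (reflect3 \<circ> c)) = - hom_winding w n (colouring_point V c)"
    by (rule hom_winding_reflect3[OF c walk(2,3)])
  moreover have "odd (hom_winding w n (colouring_point V c))"
    using odd_winding[OF \<open>odd n\<close>] c walk(3)
    by (simp add: hom_winding_colouring_point proper_3_colouring_def)
  ultimately have "hom_winding w n (colouring_point V (reflect3 \<circ> c)) \<noteq>
      hom_winding w n (colouring_point V c)"
    by presburger
  then have "\<not> hom_winding w n constant_on hom_realization V E K3_V K3_E"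
    using colouring_point_in_hom_realization c proper_3_colouring_reflect3
    unfolding constant_on_def by metis
  then have "\<not> connected (hom_realization V E K3_V K3_E)"
    using hom_winding_constant_on_hom_realization[OF \<open>finite V\<close> _ walk] by blast
  then show ?thesis
    using colouring_point_in_hom_realization[OF c] path_connected_imp_connected
    unfolding disconnected_space_def by blast
qed

end
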